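(* Let $l\geq1$ be an integer, and in the dihedral group $D_{2l}=\langle a,b\mid a^2=b^2=(ab)^{2l}=1\rangle$ let $Y_t=a^{\epsilon_1}b^{\epsilon_2}a^{\epsilon_3}b^{\epsilon_4}\cdots$ be the alternating product of $t$ factors (the last factor is $a^{\epsilon_t}$ if $t$ is odd and $b^{\epsilon_t}$ if $t$ is even), where the $\epsilon_i$ are independent and uniform in $\{0,1\}$. Let $p_t(x)=\mathbb{P}(d(Y_t,\{e,a\})=x)$, where $d$ is the distance in the Cayley graph of $D_{2l}$ with respect to $\{a,b\}$. Then for each integer $t\geq0$, the sequence $(p_t(0),p_t(1),\dots,p_t(l-1))$ is non-increasing. *)

theory Defs
  imports Complex_Main
begin

text \<open>Concrete model of the dihedral group
  D_{2l} = < a, b | a^2 = b^2 = (ab)^{2l} = 1 > (order 4l), realised as the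
  affine maps x \<mapsto> (+/-)x + r of Z/(2l)Z.  An element (r, s) stands for
  x \<mapsto> (if s then -x else x) + r, with r normalised to {0..2l-1};
  the product is composition.  Then a = (0,True) : x \<mapsto> -x,
  b = (1,True) : x \<mapsto> 1 - x, and ab : x \<mapsto> x - 1 has order 2l.\<close>

type_synonym dih = "int \<times> bool"

definition dmult :: "nat \<Rightarrow> dih \<Rightarrow> dih \<Rightarrow> dih" where
  "dmult l g h = ((fst g + (if snd g then - fst h else fst h)) mod (2 * int l),
                  snd g \<noteq> snd h)"

definition did :: dih where "did = (0, False)"
definition gen_a :: dih where "gen_a = (0, True)"
definition gen_b :: dih where "gen_b = (1, True)"

definition walk :: "nat \<Rightarrow> dih \<Rightarrow> bool list \<Rightarrow> dih" where
  "walk l g ws = foldl (\<lambda>x w. dmult l x (if w then gen_b else gen_a)) g ws"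

definition cdist_set :: "nat \<Rightarrow> dih \<Rightarrow> dih set \<Rightarrow> nat" where
  "cdist_set l g S = (LEAST n. \<exists>ws. length ws = n \<and> walk l g ws \<in> S)"

definition fac_gen :: "nat \<Rightarrow> dih" where
  "fac_gen i = (if odd i then gen_a else gen_b)"

fun altprod :: "nat \<Rightarrow> nat \<Rightarrow> bool list \<Rightarrow> dih" where
  "altprod l i [] = did"
| "altprod l i (e # es) = dmult l (if e then fac_gen i else did) (altprod l (Suc i) es)"

definition Y :: "nat \<Rightarrow> bool list \<Rightarrow> dih" where
  "Y l es = altprod l 1 es"

definition p :: "nat \<Rightarrow> nat \<Rightarrow> nat \<Rightarrow> real" where
  "p l t x = real (card {es :: bool list. length es = t \<and> cdist_set l (Y l es) {did, gen_a} = x})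
             / 2 ^ t"

end

theory Submission
  imports Defs
begin

text \<open>The Cayley graph of D_{2l} with respect to {a, b} is a cycle of length 4l. Numbering its
  vertices 0, ..., 4l-1 so that a is 0 and e is 1, right multiplication by a swaps 2k and 2k+1,
  right multiplication by b swaps 2k+1 and 2k+2 (mod 4l), and the distance to {e, a} is the
  distance to the edge {0, 1}.

  Let N_t(q) be the number of exponent vectors putting Y_t at vertex q. Since
  Y_{t+1} = Y_t g^{eps}, we have N_{t+1}(q) = N_t(q) + N_t(\<sigma> q) for the swap \<sigma> of the
  (t+1)-st generator. For t \<ge> 1 the function N_t is invariant under the reflection of the cycle
  fixing the edge {0, 1} and non-increasing along 1, 2, ..., 2l; both properties survive the
  recursion, because \<sigma> either fixes the pair {q, q+1} or pairs q-1 with q and q+1 with q+2.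
  Hence p_t(x) = 2 N_t(x+1) / 2^t for t \<ge> 1, while p_0 is the point mass at 0.\<close>

lemma int_parity_cases: obtains k where "(q::int) = 2 * k" | k where "q = 2 * k + 1"
  by (metis oddE evenE)

lemma antimono_on_int_interval:
  fixes f :: "int \<Rightarrow> 'a::order"
  assumes step: "\<And>q. a \<le> q \<Longrightarrow> q < b \<Longrightarrow> f (q + 1) \<le> f q"
    and "a \<le> x" "x \<le> y" "y \<le> b"
  shows "f y \<le> f x"
  using \<open>x \<le> y\<close> \<open>y \<le> b\<close>
proof (induction y rule: int_ge_induct)
  case (step y)
  then have "f (y + 1) \<le> f y" "f y \<le> f x" using assms(1)[of y] \<open>a \<le> x\<close> by simp_all
  then show ?case by (rule order_trans)
qed simp

lemma finite_bool_lists_length: "finite {xs :: bool list. length xs = n \<and> P xs}"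
  by (rule finite_subset[OF _ finite_lists_length_eq[of "UNIV :: bool set" n]]) auto

lemma card_bool_lists_Suc:
  "card {xs :: bool list. length xs = Suc n \<and> P xs} =
   card {xs. length xs = n \<and> P (xs @ [False])} + card {xs. length xs = n \<and> P (xs @ [True])}"
proof -
  let ?S = "\<lambda>b. {xs :: bool list. length xs = n \<and> P (xs @ [b])}"
  let ?snoc = "\<lambda>b xs. xs @ [b]"
  have card_snoc: "card (?snoc b ` ?S b) = card (?S b)" for b
    by (rule card_image) (simp add: inj_on_def)
  have "{xs :: bool list. length xs = Suc n \<and> P xs} = ?snoc False ` ?S False \<union> ?snoc True ` ?S True"
    (is "?L = ?R")
  proof
    show "?R \<subseteq> ?L" by (intro Un_least image_subsetI) auto
    show "?L \<subseteq> ?R"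
    proof
      fix xs assume xs: "xs \<in> ?L"
      then obtain ys b where "xs = ys @ [b]" by (cases xs rule: rev_cases) auto
      with xs show "xs \<in> ?R" by (cases b) auto
    qed
  qed
  moreover have "?snoc False ` ?S False \<inter> ?snoc True ` ?S True = {}"
    by auto
  ultimately have "card ?L = card (?snoc False ` ?S False) + card (?snoc True ` ?S True)"
    using card_Un_disjoint[OF finite_imageI finite_imageI,
        OF finite_bool_lists_length finite_bool_lists_length]
    by (simp only:)
  also have "\<dots> = card (?S False) + card (?S True)"
    by (simp only: card_snoc)
  finally show ?thesis .
qed

abbreviation cycle_vertices :: "nat \<Rightarrow> int set" where
  "cycle_vertices l \<equiv> {0..<4 * int l}"

definition dih_normal :: "nat \<Rightarrow> dih \<Rightarrow> bool" where
  "dih_normal l g \<longleftrightarrow> 0 \<le> fst g \<and> fst g < 2 * int l"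

definition cycle_pos :: "dih \<Rightarrow> int" where
  "cycle_pos g = 2 * fst g + (if snd g then 0 else 1)"

definition swap_a :: "int \<Rightarrow> int" where
  "swap_a q = (if even q then q + 1 else q - 1)"

definition swap_b :: "nat \<Rightarrow> int \<Rightarrow> int" where
  "swap_b l q = (if even q then (if q = 0 then 4 * int l - 1 else q - 1)
                 else (if q = 4 * int l - 1 then 0 else q + 1))"

definition swap :: "nat \<Rightarrow> bool \<Rightarrow> int \<Rightarrow> int" where
  "swap l w = (if w then swap_b l else swap_a)"

definition cycle_refl :: "nat \<Rightarrow> int \<Rightarrow> int" where
  "cycle_refl l q = (if q = 0 then 1 else if q = 1 then 0 else 4 * int l + 1 - q)"

definition cycle_dist :: "nat \<Rightarrow> int \<Rightarrow> int" where
  "cycle_dist l q = (if q = 0 then 0 else if q \<le> 2 * int l then q - 1 else 4 * int l - q)"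

lemma dih_normal_dmult: "l \<ge> 1 \<Longrightarrow> dih_normal l (dmult l g h)"
  by (simp add: dih_normal_def dmult_def)

lemma cycle_pos_in_cycle_vertices: "dih_normal l g \<Longrightarrow> cycle_pos g \<in> cycle_vertices l"
  by (auto simp: dih_normal_def cycle_pos_def)

lemma cycle_pos_dmult_gen_a:
  "dih_normal l g \<Longrightarrow> cycle_pos (dmult l g gen_a) = swap_a (cycle_pos g)"
  by (auto simp: dih_normal_def cycle_pos_def dmult_def gen_a_def swap_a_def)

lemma cycle_pos_dmult_gen_b:
  assumes "dih_normal l g"
  shows "cycle_pos (dmult l g gen_b) = swap_b l (cycle_pos g)"
proof -
  obtain r s where g: "g = (r, s)" "0 \<le> r" "r < 2 * int l"
    using assms by (cases g) (auto simp: dih_normal_def)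
  have "(r + 1) mod (2 * int l) = (if r = 2 * int l - 1 then 0 else r + 1)"
    using g by auto
  then show ?thesis
    using g by (auto simp: cycle_pos_def dmult_def gen_b_def swap_b_def zmod_minus1)
qed

lemma cycle_pos_dmult:
  "dih_normal l g \<Longrightarrow> cycle_pos (dmult l g (if w then gen_b else gen_a)) = swap l w (cycle_pos g)"
  by (simp add: swap_def cycle_pos_dmult_gen_a cycle_pos_dmult_gen_b)

lemma cycle_pos_in_did_gen_a_iff:
  "dih_normal l g \<Longrightarrow> g \<in> {did, gen_a} \<longleftrightarrow> cycle_pos g \<in> {0, 1}"
  by (cases g) (auto simp: dih_normal_def cycle_pos_def did_def gen_a_def)

lemma swap_in_cycle_vertices:
  "l \<ge> 1 \<Longrightarrow> q \<in> cycle_vertices l \<Longrightarrow> swap l w q \<in> cycle_vertices l"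
  by (cases w; cases q rule: int_parity_cases; auto simp: swap_def swap_a_def swap_b_def; presburger)

lemma swap_swap: "l \<ge> 1 \<Longrightarrow> q \<in> cycle_vertices l \<Longrightarrow> swap l w (swap l w q) = q"
  by (cases w; cases q rule: int_parity_cases; auto simp: swap_def swap_a_def swap_b_def; presburger)

lemma swap_cycle_refl:
  "l \<ge> 1 \<Longrightarrow> q \<in> cycle_vertices l \<Longrightarrow> swap l w (cycle_refl l q) = cycle_refl l (swap l w q)"
  by (cases w; cases q rule: int_parity_cases;
      auto simp: swap_def swap_a_def swap_b_def cycle_refl_def; presburger)

lemma swap_unpaired:
  assumes "l \<ge> 1" "q \<in> {1..<2 * int l}" "swap l w q \<noteq> q + 1"
  shows "swap l w q = q - 1" "swap l w (q + 1) = q + 2"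
  using assms
  by (cases w; cases q rule: int_parity_cases; auto simp: swap_def swap_a_def swap_b_def; presburger)+

lemma cycle_refl_in_cycle_vertices:
  "l \<ge> 1 \<Longrightarrow> q \<in> cycle_vertices l \<Longrightarrow> cycle_refl l q \<in> cycle_vertices l"
  by (auto simp: cycle_refl_def)

lemma cycle_dist_nonneg: "q \<in> cycle_vertices l \<Longrightarrow> 0 \<le> cycle_dist l q"
  by (auto simp: cycle_dist_def)

lemma cycle_dist_eq_0_iff: "q \<in> cycle_vertices l \<Longrightarrow> cycle_dist l q = 0 \<longleftrightarrow> q \<in> {0, 1}"
  by (auto simp: cycle_dist_def)

lemma cycle_dist_le_swap:
  "l \<ge> 1 \<Longrightarrow> q \<in> cycle_vertices l \<Longrightarrow> cycle_dist l q \<le> cycle_dist l (swap l w q) + 1"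
  by (cases w; cases q rule: int_parity_cases;
      auto simp: swap_def swap_a_def swap_b_def cycle_dist_def; presburger)

lemma cycle_dist_swap_pred:
  assumes "l \<ge> 1" "q \<in> cycle_vertices l" "cycle_dist l q \<ge> 1"
  obtains w where "cycle_dist l (swap l w q) = cycle_dist l q - 1"
proof -
  have "cycle_dist l (swap_a q) = cycle_dist l q - 1 \<or> cycle_dist l (swap_b l q) = cycle_dist l q - 1"
    using assms
    by (cases q rule: int_parity_cases; auto simp: swap_a_def swap_b_def cycle_dist_def; presburger)
  then show ?thesis using that[of False] that[of True] by (auto simp: swap_def)
qed

lemma walk_Nil: "walk l g [] = g"
  by (simp add: walk_def)

lemma walk_Cons: "walk l g (w # ws) = walk l (dmult l g (if w then gen_b else gen_a)) ws"
  by (simp add: walk_def)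

lemma dih_normal_walk: "l \<ge> 1 \<Longrightarrow> dih_normal l g \<Longrightarrow> dih_normal l (walk l g ws)"
  by (induction ws arbitrary: g) (simp_all add: walk_Nil walk_Cons dih_normal_dmult)

lemma cycle_dist_walk_le:
  assumes "l \<ge> 1" "dih_normal l g"
  shows "cycle_dist l (cycle_pos g) \<le> cycle_dist l (cycle_pos (walk l g ws)) + int (length ws)"
  using assms(2)
proof (induction ws arbitrary: g)
  case Nil
  then show ?case by (simp add: walk_Nil)
next
  case (Cons w ws)
  let ?h = "dmult l g (if w then gen_b else gen_a)"
  have "cycle_dist l (cycle_pos g) \<le> cycle_dist l (cycle_pos ?h) + 1"
    using cycle_dist_le_swap[OF assms(1) cycle_pos_in_cycle_vertices] Cons.prems
    by (simp add: cycle_pos_dmult)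
  moreover have "cycle_dist l (cycle_pos ?h) \<le> cycle_dist l (cycle_pos (walk l ?h ws)) + int (length ws)"
    using Cons.IH dih_normal_dmult[OF assms(1)] by blast
  ultimately show ?case by (simp add: walk_Cons)
qed

lemma walk_to_did_gen_a:
  assumes "l \<ge> 1" "dih_normal l g" "cycle_dist l (cycle_pos g) = int n"
  shows "\<exists>ws. length ws = n \<and> walk l g ws \<in> {did, gen_a}"
  using assms(2,3)
proof (induction n arbitrary: g)
  case 0
  then show ?case
    using cycle_dist_eq_0_iff cycle_pos_in_cycle_vertices cycle_pos_in_did_gen_a_iff
    by (metis length_0_conv of_nat_0 walk_Nil)
next
  case (Suc n)
  obtain w where w: "cycle_dist l (swap l w (cycle_pos g)) = int n"
    using cycle_dist_swap_pred[OF assms(1) cycle_pos_in_cycle_vertices[OF Suc.prems(1)]]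
      Suc.prems(2) by fastforce
  let ?h = "dmult l g (if w then gen_b else gen_a)"
  obtain ws where "length ws = n" "walk l ?h ws \<in> {did, gen_a}"
    using Suc.IH[OF dih_normal_dmult[OF assms(1)]] w cycle_pos_dmult[OF Suc.prems(1)] by metis
  then show ?case by (intro exI[of _ "w # ws"]) (simp add: walk_Cons)
qed

lemma cdist_set_eq_cycle_dist:
  assumes l: "l \<ge> 1" and g: "dih_normal l g"
  shows "cdist_set l g {did, gen_a} = nat (cycle_dist l (cycle_pos g))"
  unfolding cdist_set_def
proof (rule Least_equality)
  have "cycle_dist l (cycle_pos g) = int (nat (cycle_dist l (cycle_pos g)))"
    using cycle_dist_nonneg[OF cycle_pos_in_cycle_vertices[OF g]] by simp
  then show "\<exists>ws. length ws = nat (cycle_dist l (cycle_pos g)) \<and> walk l g ws \<in> {did, gen_a}"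
    using walk_to_did_gen_a[OF l g] by presburger
next
  fix n assume "\<exists>ws. length ws = n \<and> walk l g ws \<in> {did, gen_a}"
  then obtain ws where ws: "length ws = n" "walk l g ws \<in> {did, gen_a}" by blast
  have "cycle_dist l (cycle_pos (walk l g ws)) = 0"
    using ws(2) dih_normal_walk[OF l g] cycle_pos_in_did_gen_a_iff cycle_dist_eq_0_iff
      cycle_pos_in_cycle_vertices by blast
  then show "nat (cycle_dist l (cycle_pos g)) \<le> n"
    using cycle_dist_walk_le[OF l g, of ws] ws(1) by simp
qed

lemma dmult_assoc: "dmult l (dmult l g h) k = dmult l g (dmult l h k)"
  by (cases g; cases h; cases k)
     (auto simp: dmult_def mod_add_left_eq mod_add_right_eq mod_minus_eq mod_diff_right_eq
        mod_diff_left_eq algebra_simps)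

lemma dmult_did_right: "dih_normal l g \<Longrightarrow> dmult l g did = g"
  by (cases g) (auto simp: dmult_def did_def dih_normal_def)

lemma dmult_did_left: "dih_normal l g \<Longrightarrow> dmult l did g = g"
  by (cases g) (auto simp: dmult_def did_def dih_normal_def)

lemma fac_gen_eq: "fac_gen i = (if even i then gen_b else gen_a)"
  by (simp add: fac_gen_def)

lemma altprod_snoc:
  assumes "l \<ge> 1"
  shows "altprod l i (es @ [e]) = dmult l (altprod l i es) (if e then fac_gen (i + length es) else did)"
proof (induction es arbitrary: i)
  case Nil
  have "dih_normal l (fac_gen i)" "dih_normal l did"
    using assms by (auto simp: dih_normal_def fac_gen_def gen_a_def gen_b_def did_def)
  then show ?case by (simp add: dmult_did_left dmult_did_right)
qed (simp add: dmult_assoc)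

lemma dih_normal_Y: "l \<ge> 1 \<Longrightarrow> dih_normal l (Y l es)"
  by (cases es) (simp_all add: Y_def dih_normal_def did_def dmult_def)

lemma cycle_pos_Y_snoc:
  assumes "l \<ge> 1"
  shows "cycle_pos (Y l (es @ [e])) =
    (if e then swap l (even (Suc (length es))) (cycle_pos (Y l es)) else cycle_pos (Y l es))"
  using dih_normal_Y[OF assms, of es]
  by (simp add: Y_def altprod_snoc[OF assms] dmult_did_right fac_gen_eq cycle_pos_dmult)

definition pos_count :: "nat \<Rightarrow> nat \<Rightarrow> int \<Rightarrow> nat" where
  "pos_count l t q = card {es. length es = t \<and> cycle_pos (Y l es) = q}"

lemma pos_count_0: "pos_count l 0 q = (if q = 1 then 1 else 0)"
proof -
  have "cycle_pos (Y l []) = 1" by (simp add: Y_def did_def cycle_pos_def)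
  then have "{es. length es = 0 \<and> cycle_pos (Y l es) = q} = (if q = 1 then {[]} else {})" by auto
  then show ?thesis by (simp add: pos_count_def)
qed

lemma pos_count_Suc:
  assumes l: "l \<ge> 1" and q: "q \<in> cycle_vertices l"
  shows "pos_count l (Suc t) q = pos_count l t q + pos_count l t (swap l (even (Suc t)) q)"
proof -
  let ?s = "swap l (even (Suc t))"
  have "{es. length es = t \<and> cycle_pos (Y l (es @ [True])) = q} =
      {es. length es = t \<and> cycle_pos (Y l es) = ?s q}"
  proof (rule Collect_cong)
    fix es
    have "cycle_pos (Y l es) \<in> cycle_vertices l"
      using cycle_pos_in_cycle_vertices[OF dih_normal_Y[OF l]] .
    then show "(length es = t \<and> cycle_pos (Y l (es @ [True])) = q) \<longleftrightarrow>
        (length es = t \<and> cycle_pos (Y l es) = ?s q)"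
      using cycle_pos_Y_snoc[OF l, of es True] swap_swap[OF l] q by auto
  qed
  then show ?thesis
    unfolding pos_count_def by (subst card_bool_lists_Suc) (simp add: cycle_pos_Y_snoc[OF l])
qed

definition sym_antitone :: "nat \<Rightarrow> (int \<Rightarrow> 'a::order) \<Rightarrow> bool" where
  "sym_antitone l F \<longleftrightarrow>
     (\<forall>q \<in> cycle_vertices l. F (cycle_refl l q) = F q) \<and>
     (\<forall>q \<in> {1..<2 * int l}. F (q + 1) \<le> F q)"

lemma sym_antitone_cong:
  assumes "l \<ge> 1" "\<And>q. q \<in> cycle_vertices l \<Longrightarrow> F q = G q"
  shows "sym_antitone l F \<longleftrightarrow> sym_antitone l G"
  using assms cycle_refl_in_cycle_vertices[OF assms(1)] by (simp add: sym_antitone_def)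

lemma sym_antitone_succ_le:
  assumes l: "l \<ge> 1" and F: "sym_antitone l F" and q: "q \<in> {0..2 * int l}"
  shows "F (q + 1) \<le> F q"
proof -
  have sym: "F (cycle_refl l q') = F q'" if "q' \<in> cycle_vertices l" for q'
    using F that unfolding sym_antitone_def by auto
  consider "q = 0" | "q \<in> {1..<2 * int l}" | "q = 2 * int l"
    using q by fastforce
  then show ?thesis
  proof cases
    case 1
    then show ?thesis using sym[of 0] l by (simp add: cycle_refl_def)
  next
    case 2
    then show ?thesis using F unfolding sym_antitone_def by simp
  qed (use sym[of "2 * int l + 1"] l in \<open>simp add: cycle_refl_def\<close>)
qed

lemma sym_antitone_antimono:
  assumes "sym_antitone l F" "1 \<le> q" "q \<le> q'" "q' \<le> 2 * int l"
  shows "F q' \<le> F q"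
proof (rule antimono_on_int_interval[of 1 "2 * int l"])
  show "F (r + 1) \<le> F r" if "1 \<le> r" "r < 2 * int l" for r
    using assms(1) that by (simp add: sym_antitone_def)
qed (use assms in auto)

lemma sym_antitone_swap_sum:
  fixes F :: "int \<Rightarrow> 'a::ordered_ab_semigroup_add"
  assumes l: "l \<ge> 1" and F: "sym_antitone l F"
  shows "sym_antitone l (\<lambda>q. F q + F (swap l w q))"
  unfolding sym_antitone_def
proof (intro conjI ballI)
  fix q assume q: "q \<in> cycle_vertices l"
  have "F (cycle_refl l q') = F q'" if "q' \<in> cycle_vertices l" for q'
    using F that unfolding sym_antitone_def by auto
  then show "F (cycle_refl l q) + F (swap l w (cycle_refl l q)) = F q + F (swap l w q)"
    using q swap_cycle_refl[OF l q] swap_in_cycle_vertices[OF l q] by simp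
next
  fix q assume q: "q \<in> {1..<2 * int l}"
  show "F (q + 1) + F (swap l w (q + 1)) \<le> F q + F (swap l w q)"
  proof (cases "swap l w q = q + 1")
    case True
    then have "swap l w (q + 1) = q" using swap_swap[OF l, of q w] q by simp
    then show ?thesis using True add.commute[of "F (q + 1)" "F q"] by simp
  next
    case False
    have le1: "F (q + 1) \<le> F q" using sym_antitone_succ_le[OF l F, of q] q by simp
    have le2: "F q \<le> F (q - 1)" using sym_antitone_succ_le[OF l F, of "q - 1"] q by simp
    have le3: "F (q + 2) \<le> F (q + 1)"
      using sym_antitone_succ_le[OF l F, of "q + 1"] q by (simp add: add.assoc)
    have "F (q + 1) + F (q + 2) \<le> F q + F (q - 1)"
      using add_mono[OF le1 order_trans[OF le3 order_trans[OF le1 le2]]] .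
    then show ?thesis using swap_unpaired[OF l q False] by simp
  qed
qed

lemma sym_antitone_pos_count: "l \<ge> 1 \<Longrightarrow> sym_antitone l (pos_count l (Suc t))"
proof (induction t)
  case 0
  have "sym_antitone l (\<lambda>q. if q \<in> {0, 1} then 1 else 0 :: nat)"
    by (auto simp: sym_antitone_def cycle_refl_def)
  moreover have "pos_count l (Suc 0) q = (if q \<in> {0, 1} then 1 else 0)"
    if "q \<in> cycle_vertices l" for q
    using pos_count_Suc[OF 0 that, of 0] by (auto simp: pos_count_0 swap_def swap_a_def)
  ultimately show ?case by (subst sym_antitone_cong[OF 0]) simp_all
next
  case (Suc t)
  have "sym_antitone l
      (\<lambda>q. pos_count l (Suc t) q + pos_count l (Suc t) (swap l (even (Suc (Suc t))) q))"
    by (rule sym_antitone_swap_sum[OF Suc.prems Suc.IH[OF Suc.prems]])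
  then show ?case by (subst sym_antitone_cong[OF Suc.prems]) (simp_all add: pos_count_Suc[OF Suc.prems])
qed

lemma nat_cycle_dist_eq_iff:
  "q \<in> cycle_vertices l \<Longrightarrow> x < l \<Longrightarrow>
   nat (cycle_dist l q) = x \<longleftrightarrow> q = int x + 1 \<or> q = cycle_refl l (int x + 1)"
  by (auto simp: cycle_dist_def cycle_refl_def)

lemma p_eq_pos_count:
  assumes l: "l \<ge> 1" and x: "x < l"
  shows "p l t x = real (pos_count l t (int x + 1) + pos_count l t (cycle_refl l (int x + 1))) / 2 ^ t"
proof -
  have level: "{es. length es = t \<and> cdist_set l (Y l es) {did, gen_a} = x} =
      {es. length es = t \<and> cycle_pos (Y l es) = int x + 1} \<union>
      {es. length es = t \<and> cycle_pos (Y l es) = cycle_refl l (int x + 1)}"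
    using nat_cycle_dist_eq_iff[OF cycle_pos_in_cycle_vertices[OF dih_normal_Y[OF l]] x]
      cdist_set_eq_cycle_dist[OF l dih_normal_Y[OF l]] by auto
  have "cycle_refl l (int x + 1) \<noteq> int x + 1" using x by (auto simp: cycle_refl_def)
  then show ?thesis
    unfolding p_def pos_count_def level by (subst card_Un_disjoint) (auto simp: finite_bool_lists_length)
qed

theorem fact3p3:
  fixes l t :: nat
  assumes "l \<ge> 1"
  shows "\<forall>x y. x \<le> y \<and> y < l \<longrightarrow> p l t y \<le> p l t x"
proof (intro allI impI)
  fix x y assume xy: "x \<le> y \<and> y < l"
  show "p l t y \<le> p l t x"
  proof (cases t)
    case 0
    have "cycle_refl l (int z + 1) \<noteq> 1" if "z < l" for z
      using that by (auto simp: cycle_refl_def)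
    then show ?thesis
      using xy 0 by (simp add: p_eq_pos_count[OF assms] pos_count_0)
  next
    case (Suc t')
    have F: "sym_antitone l (pos_count l t)"
      using sym_antitone_pos_count[OF assms] Suc by simp
    then have "pos_count l t (int y + 1) \<le> pos_count l t (int x + 1)"
      by (rule sym_antitone_antimono) (use xy in auto)
    moreover have "pos_count l t (cycle_refl l q) = pos_count l t q" if "q \<in> cycle_vertices l" for q
      using F that by (simp add: sym_antitone_def)
    ultimately show ?thesis
      using xy by (simp add: p_eq_pos_count[OF assms] divide_right_mono)
  qed
qed

end
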